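(* Let $w\in F_2$ be a word in $x,y$ and $G=\mathrm{SL}(2,\mathbb{C})$. If the trace map $\psi_w$ of $w$ is Big, then the word map $w:G^2\to G$ is almost surjective, i.e. its image contains $G\setminus\{-\mathrm{id}\}$.
   Context: For a word $w(x,y)$ there are polynomials $P_w(s,t,u)$, $Q_w(s,t,u)$ with integer coefficients such that for all $x,y\in G$: $\mathrm{tr}(w(x,y))=P_w(\mathrm{tr}\,x,\mathrm{tr}\,y,\mathrm{tr}\,xy)$ and $\mathrm{tr}(w(x,y)y)=Q_w(\mathrm{tr}\,x,\mathrm{tr}\,y,\mathrm{tr}\,xy)$. The trace map is $\psi_w:\mathbb{C}^3\to\mathbb{C}^3$, $\psi_w(s,t,u)=(P_w(s,t,u),t,Q_w(s,t,u))$. For $a\in\mathbb{C}$ let $\psi_a:\mathbb{C}^2_{s,u}\to\mathbb{C}^2$, $\psi_a(s,u)=(P_w(s,a,u),Q_w(s,a,u))$; $\psi_a$ is Big if $\psi_a(\mathbb{C}^2)=\mathbb{C}^2\setminus T_a$ for a finite set $T_a$, and $\psi_w$ is Big if $\psi_a$ is Big for some $a\in\mathbb{C}$. *)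

theory Defs
  imports "HOL-Analysis.Analysis"
begin

text \<open>Words in the free group F_2 on x, y: lists of letters (generator, inverted?).\<close>
datatype gen = GX | GY

type_synonym word = "(gen \<times> bool) list"

definition SL2 :: "(complex^2^2) set" where
  "SL2 = {A. det A = 1}"

fun letter_eval :: "complex^2^2 \<Rightarrow> complex^2^2 \<Rightarrow> gen \<times> bool \<Rightarrow> complex^2^2" where
  "letter_eval x y (g, b) =
     (let m = (if g = GX then x else y) in if b then matrix_inv m else m)"

definition word_eval :: "word \<Rightarrow> complex^2^2 \<Rightarrow> complex^2^2 \<Rightarrow> complex^2^2" where
  "word_eval w x y = foldr (\<lambda>l acc. letter_eval x y l ** acc) w (mat 1)"

definition psi_a_Big ::
  "(complex \<Rightarrow> complex \<Rightarrow> complex \<Rightarrow> complex) \<Rightarrow> (complex \<Rightarrow> complex \<Rightarrow> complex \<Rightarrow> complex) \<Rightarrow> complex \<Rightarrow> bool" where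
  "psi_a_Big P Q a \<longleftrightarrow>
     (\<exists>T. finite T \<and> (\<lambda>(s, u). (P s a u, Q s a u)) ` UNIV = UNIV - T)"

definition trace_map_Big ::
  "(complex \<Rightarrow> complex \<Rightarrow> complex \<Rightarrow> complex) \<Rightarrow> (complex \<Rightarrow> complex \<Rightarrow> complex \<Rightarrow> complex) \<Rightarrow> bool" where
  "trace_map_Big P Q \<longleftrightarrow> (\<exists>a. psi_a_Big P Q a)"

end

theory Submission
  imports Defs
begin

text \<open>
  Every element of SL(2,C) other than \<open>\<plusminus>1\<close> is non-scalar, and non-scalar 2x2 matrices
  with the same determinant and trace are conjugate (both are similar to the companion matrix of
  their characteristic polynomial). Word maps commute with simultaneous conjugation, so it
  suffices to find \<open>x, y \<in> SL(2,C)\<close> with \<open>tr w(x,y) = tr z\<close> and \<open>w(x,y)\<close> non-scalar.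
  Fix \<open>a\<close> with \<open>\<psi>\<^sub>a\<close> Big and choose \<open>q \<noteq> \<plusminus>a\<close> so that \<open>(tr z, q)\<close> avoids the finite
  exceptional set; then \<open>(tr z, q) = \<psi>\<^sub>a(s, u)\<close>, and any pair \<open>x, y\<close> with traces \<open>(s, a, u)\<close>
  works, because \<open>w(x,y) = \<plusminus>1\<close> would force \<open>tr (w(x,y) y) = \<plusminus>a\<close>. The identity is \<open>w(1,1)\<close>.
\<close>

lemma matrix_inv_inverse:
  fixes A :: "'a::semiring_1^'n^'n"
  assumes "invertible A"
  shows "A ** matrix_inv A = mat 1" "matrix_inv A ** A = mat 1"
  using someI_ex[OF assms[unfolded invertible_def]] by (simp_all add: matrix_inv_def)

lemma matrix_inv_unique:
  fixes A B :: "'a::semiring_1^'n^'n"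
  assumes "A ** B = mat 1" "B ** A = mat 1"
  shows "matrix_inv A = B"
proof -
  have A: "invertible A" using assms unfolding invertible_def by blast
  have "matrix_inv A = matrix_inv A ** (A ** B)" using assms by simp
  also have "\<dots> = B" by (simp add: matrix_mul_assoc matrix_inv_inverse[OF A])
  finally show ?thesis .
qed

lemma matrix_inv_mat_1 [simp]: "matrix_inv (mat 1 :: 'a::semiring_1^'n^'n) = mat 1"
  by (rule matrix_inv_unique) simp_all

lemma matrix_inv_conjugate:
  fixes h x :: "'a::semiring_1^'n^'n"
  assumes "invertible h" "invertible x"
  shows "matrix_inv (h ** x ** matrix_inv h) = h ** matrix_inv x ** matrix_inv h"
proof (rule matrix_inv_unique)
  have "h ** x ** matrix_inv h ** (h ** matrix_inv x ** matrix_inv h)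
      = h ** x ** (matrix_inv h ** h) ** matrix_inv x ** matrix_inv h"
    by (simp add: matrix_mul_assoc)
  then show "h ** x ** matrix_inv h ** (h ** matrix_inv x ** matrix_inv h) = mat 1"
    using assms by (simp add: matrix_inv_inverse matrix_mul_assoc[symmetric])
  have "h ** matrix_inv x ** matrix_inv h ** (h ** x ** matrix_inv h)
      = h ** matrix_inv x ** (matrix_inv h ** h) ** x ** matrix_inv h"
    by (simp add: matrix_mul_assoc)
  then show "h ** matrix_inv x ** matrix_inv h ** (h ** x ** matrix_inv h) = mat 1"
    using assms by (simp add: matrix_inv_inverse matrix_mul_assoc[symmetric])
qed

lemma det_matrix_inv:
  fixes A :: "'a::field^'n^'n"
  assumes "invertible A"
  shows "det (matrix_inv A) = inverse (det A)"
proof -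
  have "det A * det (matrix_inv A) = 1"
    by (metis det_I det_mul matrix_inv_inverse(1)[OF assms])
  then show ?thesis by (metis inverse_unique)
qed

lemma det_conjugate:
  fixes h x :: "'a::field^'n^'n"
  assumes "invertible h"
  shows "det (h ** x ** matrix_inv h) = det x"
  using assms invertible_det_nz[of h] by (simp add: det_mul det_matrix_inv)

lemma SL2_invertible: "x \<in> SL2 \<Longrightarrow> invertible x"
  by (simp add: SL2_def invertible_det_nz)

lemma matrix_inv_SL2: "x \<in> SL2 \<Longrightarrow> matrix_inv x \<in> SL2"
  by (simp add: SL2_def det_matrix_inv SL2_invertible)

lemma letter_eval_SL2: "x \<in> SL2 \<Longrightarrow> y \<in> SL2 \<Longrightarrow> letter_eval x y l \<in> SL2"
  by (cases l) (simp add: Let_def matrix_inv_SL2)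

lemma word_eval_Nil [simp]: "word_eval [] x y = mat 1"
  and word_eval_Cons [simp]: "word_eval (l # w) x y = letter_eval x y l ** word_eval w x y"
  by (simp_all add: word_eval_def)

lemma word_eval_SL2:
  assumes "x \<in> SL2" "y \<in> SL2"
  shows "word_eval w x y \<in> SL2"
  using letter_eval_SL2[OF assms] by (induction w) (simp_all add: SL2_def det_mul)

lemma word_eval_mat_1: "word_eval w (mat 1) (mat 1) = mat 1"
  by (induction w) (auto simp: Let_def split: prod.splits)

lemma word_eval_conjugate:
  assumes "invertible h" "invertible x" "invertible y"
  shows "word_eval w (h ** x ** matrix_inv h) (h ** y ** matrix_inv h)
       = h ** word_eval w x y ** matrix_inv h"
proof (induction w)
  case Nil
  show ?case using assms by (simp add: matrix_inv_inverse)
next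
  case (Cons l w)
  have letter: "letter_eval (h ** x ** matrix_inv h) (h ** y ** matrix_inv h) l
      = h ** letter_eval x y l ** matrix_inv h"
    using assms by (cases l) (simp add: Let_def matrix_inv_conjugate)
  have "word_eval (l # w) (h ** x ** matrix_inv h) (h ** y ** matrix_inv h)
      = h ** letter_eval x y l ** (matrix_inv h ** h) ** word_eval w x y ** matrix_inv h"
    by (simp add: letter Cons matrix_mul_assoc)
  then show ?case using assms by (simp add: matrix_inv_inverse matrix_mul_assoc)
qed

definition mat2 :: "'a \<Rightarrow> 'a \<Rightarrow> 'a \<Rightarrow> 'a \<Rightarrow> 'a^2^2" where
  "mat2 a b c d = (\<chi> i j. if i = 1 then (if j = 1 then a else b) else (if j = 1 then c else d))"

lemma mat2_nth [simp]:
  "mat2 a b c d $1$1 = a" "mat2 a b c d $1$2 = b" "mat2 a b c d $2$1 = c" "mat2 a b c d $2$2 = d"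
  by (simp_all add: mat2_def)

lemma mat2_eq_iff: "(A::'a^2^2) = B \<longleftrightarrow> A$1$1 = B$1$1 \<and> A$1$2 = B$1$2 \<and> A$2$1 = B$2$1 \<and> A$2$2 = B$2$2"
  by (auto simp: vec_eq_iff forall_2)

lemma matrix_mult_2_nth [simp]:
  "((A::'a::semiring_1^2^2) ** B)$i$j = A$i$1 * B$1$j + A$i$2 * B$2$j"
  by (simp add: matrix_matrix_mult_def sum_2)

lemma trace_2: "trace (A::'a::semiring_1^2^2) = A$1$1 + A$2$2"
  by (simp add: trace_def sum_2)

lemma mat_2_nth [simp]:
  "(mat c::'a::zero^2^2)$1$1 = c" "(mat c::'a^2^2)$1$2 = 0"
  "(mat c::'a::zero^2^2)$2$1 = 0" "(mat c::'a^2^2)$2$2 = c"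
  by (simp_all add: mat_def)

lemma mat_uminus: "mat (- c) = - mat (c::'a::ring_1)"
  by (simp add: vec_eq_iff mat_def)

lemma scalar_2_iff: "(\<exists>c. A = mat c) \<longleftrightarrow> A$1$2 = 0 \<and> A$2$1 = 0 \<and> A$1$1 = (A::'a::zero^2^2)$2$2"
  by (auto simp: mat2_eq_iff)

lemma SL2_scalar: "mat c \<in> SL2 \<Longrightarrow> c = 1 \<or> c = -1"
  by (simp add: SL2_def det_2 power2_eq_1_iff flip: power2_eq_square)

lemma trace_scalar_mult: "trace (mat c ** (A::'a::comm_semiring_1^2^2)) = c * trace A"
  by (simp add: trace_2 algebra_simps)

lemma similar_companion_2:
  fixes A :: "'a::field^2^2"
  assumes "\<forall>c. A \<noteq> mat c"
  shows "\<exists>g. invertible g \<and> A ** g = g ** mat2 0 (- det A) 1 (trace A)"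
proof -
  \<comment> \<open>The columns of \<open>g\<close> are a cyclic vector \<open>v\<close> of \<open>A\<close> and \<open>A v\<close>.\<close>
  consider "A$2$1 \<noteq> 0" | "A$2$1 = 0" "A$1$2 \<noteq> 0" | "A$2$1 = 0" "A$1$2 = 0" "A$1$1 \<noteq> A$2$2"
    using assms scalar_2_iff[of A] by blast
  then show ?thesis
  proof cases
    case 1
    then show ?thesis
      by (intro exI[of _ "mat2 1 (A$1$1) 0 (A$2$1)"])
        (simp add: invertible_det_nz det_2 mat2_eq_iff trace_2 algebra_simps)
  next
    case 2
    then show ?thesis
      by (intro exI[of _ "mat2 0 (A$1$2) 1 (A$2$2)"])
        (simp add: invertible_det_nz det_2 mat2_eq_iff trace_2 algebra_simps)
  next
    case 3
    then show ?thesis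
      by (intro exI[of _ "mat2 1 (A$1$1) 1 (A$2$2)"])
        (simp add: invertible_det_nz det_2 mat2_eq_iff trace_2 algebra_simps)
  qed
qed

lemma nonscalar_similar_2:
  fixes A B :: "'a::field^2^2"
  assumes "\<forall>c. A \<noteq> mat c" "\<forall>c. B \<noteq> mat c" "det A = det B" "trace A = trace B"
  shows "\<exists>h. invertible h \<and> B = h ** A ** matrix_inv h"
proof -
  define C where "C = mat2 0 (- det A) 1 (trace A)"
  obtain g1 where g1: "invertible g1" "A ** g1 = g1 ** C"
    using similar_companion_2[OF assms(1)] C_def by blast
  obtain g2 where g2: "invertible g2" "B ** g2 = g2 ** C"
    using similar_companion_2[OF assms(2)] C_def assms(3,4) by metis
  note inv1 = matrix_inv_inverse[OF g1(1)] and inv2 = matrix_inv_inverse[OF g2(1)]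
  define h where "h = g2 ** matrix_inv g1"
  have "h ** (g1 ** matrix_inv g2) = g2 ** (matrix_inv g1 ** g1) ** matrix_inv g2"
    by (simp add: h_def matrix_mul_assoc)
  then have right: "h ** (g1 ** matrix_inv g2) = mat 1" by (simp add: inv1 inv2)
  have "g1 ** matrix_inv g2 ** h = g1 ** (matrix_inv g2 ** g2) ** matrix_inv g1"
    by (simp add: h_def matrix_mul_assoc)
  then have left: "g1 ** matrix_inv g2 ** h = mat 1" by (simp add: inv1 inv2)
  have "invertible h" using left right unfolding invertible_def by blast
  have h_inv: "matrix_inv h = g1 ** matrix_inv g2" using right left by (rule matrix_inv_unique)
  have "h ** A ** matrix_inv h = g2 ** matrix_inv g1 ** (A ** g1) ** matrix_inv g2"
    unfolding h_inv by (simp add: h_def matrix_mul_assoc)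
  also have "\<dots> = g2 ** (matrix_inv g1 ** g1) ** C ** matrix_inv g2"
    by (simp add: g1(2) matrix_mul_assoc)
  also have "\<dots> = B ** (g2 ** matrix_inv g2)"
    by (simp add: inv1 g2(2) matrix_mul_assoc)
  finally show ?thesis using \<open>invertible h\<close> inv2 by auto
qed

lemma SL2_with_traces:
  "\<exists>x\<in>SL2. \<exists>y\<in>SL2. trace x = s \<and> trace y = a \<and> trace (x ** y) = u"
proof -
  \<comment> \<open>With \<open>x = [[s, 1], [-1, 0]]\<close> and \<open>y = [[0, -1/c], [c, a]]\<close> one gets \<open>tr (x y) = c + 1/c\<close>.\<close>
  define c where "c = (u + csqrt (u\<^sup>2 - 4)) / 2"
  have c: "c\<^sup>2 - u * c + 1 = 0"
    by (simp add: c_def power2_eq_square field_simps power2_csqrt[unfolded power2_eq_square])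
  then have "c \<noteq> 0" by auto
  then show ?thesis using c
    by (intro bexI[of _ "mat2 s 1 (-1) 0"] bexI[of _ "mat2 0 (-1/c) c a"])
      (simp_all add: SL2_def det_2 trace_2 field_simps power2_eq_square)
qed

lemma word_value_with_traces:
  assumes P_w: "\<forall>x\<in>SL2. \<forall>y\<in>SL2. trace (word_eval w x y) = P (trace x) (trace y) (trace (x ** y))"
    and Q_w: "\<forall>x\<in>SL2. \<forall>y\<in>SL2. trace (word_eval w x y ** y) = Q (trace x) (trace y) (trace (x ** y))"
    and Big: "psi_a_Big P Q a"
  shows "\<exists>x\<in>SL2. \<exists>y\<in>SL2. trace (word_eval w x y) = t \<and> trace y = a
           \<and> trace (word_eval w x y ** y) \<notin> {a, -a}"
proof -
  obtain T where "finite T" and img: "(\<lambda>(s, u). (P s a u, Q s a u)) ` UNIV = UNIV - T"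
    using Big unfolding psi_a_Big_def by blast
  then have "finite (snd ` T \<union> {a, -a})" by simp
  then obtain q where q: "q \<notin> snd ` T \<union> {a, -a}"
    using ex_new_if_finite[OF infinite_UNIV_char_0] by blast
  then have "(t, q) \<in> (\<lambda>(s, u). (P s a u, Q s a u)) ` UNIV"
    unfolding img by force
  then obtain s u where "P s a u = t" "Q s a u = q" by auto
  moreover obtain x y where "x \<in> SL2" "y \<in> SL2" "trace x = s" "trace y = a" "trace (x ** y) = u"
    using SL2_with_traces by blast
  ultimately show ?thesis using P_w Q_w q by auto
qed

lemma nonscalar_if_trace_mult:
  assumes "W \<in> SL2" "trace (W ** y) \<notin> {trace y, - trace y}"
  shows "\<forall>c. W \<noteq> mat c"
proof
  fix c
  show "W \<noteq> mat c"
    using assms SL2_scalar[of c] trace_scalar_mult[of c y] by auto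
qed

theorem proposition8p2:
  fixes w :: word
    and P Q :: "complex \<Rightarrow> complex \<Rightarrow> complex \<Rightarrow> complex"
  assumes P_w: "\<forall>x\<in>SL2. \<forall>y\<in>SL2. trace (word_eval w x y) = P (trace x) (trace y) (trace (x ** y))"
    and Q_w: "\<forall>x\<in>SL2. \<forall>y\<in>SL2. trace (word_eval w x y ** y) = Q (trace x) (trace y) (trace (x ** y))"
    and Big: "trace_map_Big P Q"
  shows "SL2 - {- mat 1} \<subseteq> (\<lambda>(x, y). word_eval w x y) ` (SL2 \<times> SL2)"
proof
  fix z assume z: "z \<in> SL2 - {- mat 1}"
  show "z \<in> (\<lambda>(x, y). word_eval w x y) ` (SL2 \<times> SL2)"
  proof (cases "\<exists>c. z = mat c")
    case True
    then obtain c where c: "z = mat c" by blast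
    with z have "c \<noteq> -1" by (auto simp: mat_uminus)
    with z c have "z = mat 1" using SL2_scalar by auto
    moreover have "mat 1 \<in> SL2" by (simp add: SL2_def)
    ultimately show ?thesis using word_eval_mat_1[of w] by force
  next
    case False
    obtain a where "psi_a_Big P Q a" using Big unfolding trace_map_Big_def by blast
    then obtain x y where xy: "x \<in> SL2" "y \<in> SL2" and tr: "trace (word_eval w x y) = trace z"
      and nonscalar: "\<forall>c. word_eval w x y \<noteq> mat c"
      using word_value_with_traces[OF P_w Q_w] nonscalar_if_trace_mult word_eval_SL2 by metis
    obtain h where h: "invertible h" "z = h ** word_eval w x y ** matrix_inv h"
      using nonscalar_similar_2[OF nonscalar] False tr z word_eval_SL2[OF xy]
      by (auto simp: SL2_def)
    then have "z = word_eval w (h ** x ** matrix_inv h) (h ** y ** matrix_inv h)"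
      using word_eval_conjugate xy SL2_invertible by metis
    moreover have "h ** x ** matrix_inv h \<in> SL2" "h ** y ** matrix_inv h \<in> SL2"
      using xy h(1) by (simp_all add: SL2_def det_conjugate)
    ultimately show ?thesis by force
  qed
qed

end
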